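(* Assume the standing setting described in the context, with $\varepsilon$ fixed (and, in case (b), small enough that Lemma 1 below applies). Fix $\alpha>1$ and let $\delta>0$, $c_0,c_1,c_2>0$ and $a_1(\alpha)>0$ be such that simultaneously: (L1) for every solution $x$ of (S) and every $t\ge0$ with $\|x_t\|_h\le\delta$, $\frac{d}{dt}v(t,x_t)\le-c_0\|x(t)\|^{\gamma+\mu-1}-c_1\|x(t-h)\|^{\gamma+\mu-1}-c_2\int_{-h}^0\|x(t+\theta)\|^{\gamma+\mu-1}d\theta$; and (L2) for all $t\ge0$ and all $\varphi\in S_\alpha$ with $\|\varphi\|_h\le\delta$, $v(t,\varphi)\ge a_1(\alpha)\|\varphi(0)\|^\gamma+\mathrm w_1\int_{-h}^0\|\varphi(\theta)\|^{\gamma+\mu-1}d\theta$. Let $b_2=(\beta m+\mathrm w_1+h\mathrm w_2)h$, $b_3=\beta p(\hat bh+\omega(\varepsilon)/\varepsilon)$, and let $\Delta>0$ be a positive root of $$\alpha_1\Delta^\gamma+b_2\Delta^{\gamma+\mu-1}+b_3\Delta^{\gamma+\sigma-1}=a_1(\alpha)\delta^\gamma .$$ Then every initial function $\varphi\in C_{[-h,0]}$ with $\|\varphi\|_h<\Delta$ belongs to the region of attraction of the trivial solution of (S): $x(t,\varphi)\to0$ as $t\to\infty$. Moreover, for such $\varphi$, $\|x_t\|_h\le\delta$ for all $t\ge0$.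
   Context: Standing setting. Fix $n\ge1$ and a delay $h>0$. $\|\cdot\|$ is the Euclidean norm on $\mathbb R^n$ (and the induced operator norm on matrices). $C_{[-h,0]}$ is the space of continuous $\varphi:[-h,0]\to\mathbb R^n$ with norm $\|\varphi\|_h=\max_{\theta\in[-h,0]}\|\varphi(\theta)\|$. Consider system (S): $\dot x(t)=f(x(t),x(t-h))+B(t)Q(x(t),x(t-h))$, $t\ge0$, with initial function $\varphi\in C_{[-h,0]}$; $x(t,\varphi)$ denotes its solution and $x_t\in C_{[-h,0]}$ is the state $x_t(\theta)=x(t+\theta)$, $\theta\in[-h,0]$. Assumptions: (i) $f:\mathbb R^n\times\mathbb R^n\to\mathbb R^n$ is Lipschitz, continuously differentiable in both arguments, and homogeneous of degree $\mu>1$: $f(c\mathrm x_1,c\mathrm x_2)=c^\mu f(\mathrm x_1,\mathrm x_2)$ for all $c>0$; constants $m_1,m_2,\eta_{11},\eta_{12}\ge0$ are such that $\|f(\mathrm x_1,\mathrm x_2)\|\le m_1\|\mathrm x_1\|^\mu+m_2\|\mathrm x_2\|^\mu$ and $\|\partial f/\partial \mathrm x_1(\mathrm x_1,\mathrm x_2)\|\le \eta_{11}\|\mathrm x_1\|^{\mu-1}+\eta_{12}\|\mathrm x_2\|^{\mu-1}$. (ii) $B:[0,\infty)\to\mathbb R^{n\times n}$ is continuous with $\|B(t)\|\le\hat b$ for all $t$. (iii) $Q:\mathbb R^n\times\mathbb R^n\to\mathbb R^n$ is continuously differentiable and, for some $\sigma>1$ and constants $p_1,p_2,q_{jk}\ge0$,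 $\|Q(\mathrm x_1,\mathrm x_2)\|\le p_1\|\mathrm x_1\|^\sigma+p_2\|\mathrm x_2\|^\sigma$ and $\|\partial Q/\partial\mathrm x_j(\mathrm x_1,\mathrm x_2)\|\le q_{j1}\|\mathrm x_1\|^{\sigma-1}+q_{j2}\|\mathrm x_2\|^{\sigma-1}$, $j=1,2$. (iv) The delay-free system $\dot x=f(x,x)$ is asymptotically stable, and $V:\mathbb R^n\to\mathbb R$ is a positive definite, twice continuously differentiable function, homogeneous of degree $\gamma\ge2$, with constants $\mathrm w,\alpha_0,\alpha_1,\beta,\psi>0$ such that $(\partial V/\partial\mathrm x)^T f(\mathrm x,\mathrm x)\le-\mathrm w\|\mathrm x\|^{\gamma+\mu-1}$, $\alpha_0\|\mathrm x\|^\gamma\le V(\mathrm x)\le\alpha_1\|\mathrm x\|^\gamma$, $\|\partial V/\partial\mathrm x\|\le\beta\|\mathrm x\|^{\gamma-1}$, $\|\partial^2V/\partial\mathrm x^2\|\le\psi\|\mathrm x\|^{\gamma-2}$. Perturbation classes: case (a): $\int_0^tB(s)\,ds$ is bounded on $t\ge0$ and $\sigma>(\mu+1)/2$; case (b): $\frac1T\int_t^{t+T}B(s)\,ds\to0$ as $T\to+\infty$ uniformly in $t\ge0$, and $\sigma\ge\mu$. Define $L(t,\varepsilon)=\int_0^{t+h}e^{-\varepsilon(t+h-s)}B(s)\,ds$, where $\varepsilon=0$ in case (a) and $\varepsilon>0$ is a parameter in case (b). In case (b), $\omega(\varepsilon):=\sup_{t\ge0}\varepsilon\|L(t,\varepsilon)\|$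 is finite and $\omega(\varepsilon)\to0$ as $\varepsilon\to0$. In case (a) let $l_0>0$ with $\|L(t,0)\|\le l_0$ for all $t\ge0$, and throughout read $\omega(\varepsilon)$ as $0$ and $\omega(\varepsilon)/\varepsilon$ as $l_0$. Fix $\mathrm w_1,\mathrm w_2>0$ with $\mathrm w_0:=\mathrm w-\mathrm w_1-h\mathrm w_2>0$. The functional $v:[0,\infty)\times C_{[-h,0]}\to\mathbb R$ is $v(t,\varphi)=V(\varphi(0))+\Big(\frac{\partial V}{\partial\mathrm x}(\varphi(0))\Big)^T\Big(\int_{-h}^0\big(f(\varphi(0),\varphi(\theta))+B(t+\theta+h)Q(\varphi(0),\varphi(\theta))\big)d\theta-L(t,\varepsilon)Q(\varphi(0),\varphi(0))\Big)+\int_{-h}^0(\mathrm w_1+(h+\theta)\mathrm w_2)\|\varphi(\theta)\|^{\gamma+\mu-1}d\theta.$ For $\alpha>1$, $S_\alpha=\{\varphi\in C_{[-h,0]}:\|\varphi(\theta)\|\le\alpha\|\varphi(0)\|\ \forall\theta\in[-h,0]\}$. Notation: $m=m_1+m_2$, $p=p_1+p_2$. (Lemma 1: in case (a), and in case (b) for all sufficiently small $\varepsilon>0$, constants $\delta,c_0,c_1,c_2$ as in (L1) exist; Lemma 2: for each $\alpha>1$, constants $\delta,a_1(\alpha)$ as in (L2) exist.) *)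

theory Defs
  imports "HOL-Analysis.Analysis"
begin

(* Vectors of R^n are modelled by a Euclidean space type 'a; n x n matrices
  by bounded linear maps 'a \<Rightarrow>L 'a (whose norm is the induced operator norm).
  Functions on [-h,0] are functions real \<Rightarrow> 'a of which only the values on
  [-h,0] matter. *)

definition seg :: "(real \<Rightarrow> 'a) \<Rightarrow> real \<Rightarrow> real \<Rightarrow> 'a" where
  "seg x t = (\<lambda>\<theta>. x (t + \<theta>))"

definition hnorm :: "real \<Rightarrow> (real \<Rightarrow> 'a::real_normed_vector) \<Rightarrow> real" where
  "hnorm h \<phi> = Sup ((\<lambda>\<theta>. norm (\<phi> \<theta>)) ` {-h..0})"

definition Cfun :: "real \<Rightarrow> (real \<Rightarrow> 'a::real_normed_vector) \<Rightarrow> bool" where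
  "Cfun h \<phi> \<longleftrightarrow> continuous_on {-h..0} \<phi>"

definition in_S :: "real \<Rightarrow> real \<Rightarrow> (real \<Rightarrow> 'a::real_normed_vector) \<Rightarrow> bool" where
  "in_S h \<alpha> \<phi> \<longleftrightarrow> Cfun h \<phi> \<and> (\<forall>\<theta>\<in>{-h..0}. norm (\<phi> \<theta>) \<le> \<alpha> * norm (\<phi> 0))"

definition is_solution ::
  "real \<Rightarrow> ('a::euclidean_space \<Rightarrow> 'a \<Rightarrow> 'a) \<Rightarrow> (real \<Rightarrow> 'a \<Rightarrow>\<^sub>L 'a) \<Rightarrow> ('a \<Rightarrow> 'a \<Rightarrow> 'a)
    \<Rightarrow> (real \<Rightarrow> 'a) \<Rightarrow> (real \<Rightarrow> 'a) \<Rightarrow> bool" where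
  "is_solution h f B Q \<phi> x \<longleftrightarrow>
     (\<forall>\<theta>\<in>{-h..0}. x \<theta> = \<phi> \<theta>) \<and> continuous_on {-h..} x \<and>
     (\<forall>t\<ge>0. (x has_vector_derivative
                (f (x t) (x (t - h)) + blinfun_apply (B t) (Q (x t) (x (t - h)))))
             (at t within {0..}))"

definition Lmat :: "real \<Rightarrow> (real \<Rightarrow> 'a::euclidean_space \<Rightarrow>\<^sub>L 'a) \<Rightarrow> real \<Rightarrow> real \<Rightarrow> 'a \<Rightarrow>\<^sub>L 'a" where
  "Lmat h B \<epsilon> t = integral {0..t + h} (\<lambda>s. exp (- \<epsilon> * (t + h - s)) *\<^sub>R B s)"

definition omega :: "real \<Rightarrow> (real \<Rightarrow> 'a::euclidean_space \<Rightarrow>\<^sub>L 'a) \<Rightarrow> real \<Rightarrow> real" where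
  "omega h B \<epsilon> = Sup ((\<lambda>t. \<epsilon> * norm (Lmat h B \<epsilon> t)) ` {0..})"

(* The Lyapunov--Krasovskii functional v(t,\<phi>); gV is the gradient of V. *)
definition vfun ::
  "real \<Rightarrow> ('a::euclidean_space \<Rightarrow> 'a \<Rightarrow> 'a) \<Rightarrow> (real \<Rightarrow> 'a \<Rightarrow>\<^sub>L 'a) \<Rightarrow> ('a \<Rightarrow> 'a \<Rightarrow> 'a)
    \<Rightarrow> ('a \<Rightarrow> real) \<Rightarrow> ('a \<Rightarrow> 'a) \<Rightarrow> real \<Rightarrow> real \<Rightarrow> real \<Rightarrow> real \<Rightarrow> real
    \<Rightarrow> real \<Rightarrow> (real \<Rightarrow> 'a) \<Rightarrow> real" where
  "vfun h f B Q V gV w1 w2 \<gamma> \<mu> \<epsilon> t \<phi> =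
     V (\<phi> 0)
     + inner (gV (\<phi> 0))
         (integral {-h..0} (\<lambda>\<theta>. f (\<phi> 0) (\<phi> \<theta>) + blinfun_apply (B (t + \<theta> + h)) (Q (\<phi> 0) (\<phi> \<theta>)))
          - blinfun_apply (Lmat h B \<epsilon> t) (Q (\<phi> 0) (\<phi> 0)))
     + integral {-h..0} (\<lambda>\<theta>. (w1 + (h + \<theta>) * w2) * norm (\<phi> \<theta>) powr (\<gamma> + \<mu> - 1))"

definition C1_2 :: "('a::euclidean_space \<Rightarrow> 'a \<Rightarrow> 'b::euclidean_space)
    \<Rightarrow> ('a \<Rightarrow> 'a \<Rightarrow> 'a \<Rightarrow>\<^sub>L 'b) \<Rightarrow> ('a \<Rightarrow> 'a \<Rightarrow> 'a \<Rightarrow>\<^sub>L 'b) \<Rightarrow> bool" where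
  "C1_2 g F1 F2 \<longleftrightarrow>
     (\<forall>x1 x2. ((\<lambda>y. g y x2) has_derivative blinfun_apply (F1 x1 x2)) (at x1)) \<and>
     (\<forall>x1 x2. ((\<lambda>y. g x1 y) has_derivative blinfun_apply (F2 x1 x2)) (at x2)) \<and>
     continuous_on UNIV (\<lambda>z. F1 (fst z) (snd z)) \<and>
     continuous_on UNIV (\<lambda>z. F2 (fst z) (snd z))"

definition locally_lipschitz2 :: "('a::real_normed_vector \<Rightarrow> 'a \<Rightarrow> 'b::real_normed_vector) \<Rightarrow> bool" where
  "locally_lipschitz2 g \<longleftrightarrow>
     (\<forall>R>0. \<exists>K. \<forall>x1 x2 y1 y2. norm x1 \<le> R \<and> norm x2 \<le> R \<and> norm y1 \<le> R \<and> norm y2 \<le> R \<longrightarrow>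
        norm (g x1 x2 - g y1 y2) \<le> K * (norm (x1 - y1) + norm (x2 - y2)))"

definition ode_sol :: "('a::real_normed_vector \<Rightarrow> 'a) \<Rightarrow> (real \<Rightarrow> 'a) \<Rightarrow> bool" where
  "ode_sol F y \<longleftrightarrow> (\<forall>t\<ge>0. (y has_vector_derivative F (y t)) (at t within {0..}))"

definition asym_stable :: "('a::real_normed_vector \<Rightarrow> 'a) \<Rightarrow> bool" where
  "asym_stable F \<longleftrightarrow>
     (\<forall>e>0. \<exists>d>0. \<forall>y. ode_sol F y \<and> norm (y 0) < d \<longrightarrow> (\<forall>t\<ge>0. norm (y t) < e)) \<and>
     (\<exists>d>0. \<forall>y. ode_sol F y \<and> norm (y 0) < d \<longrightarrow> (y \<longlongrightarrow> 0) at_top)"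

end

theory Submission
  imports Defs
begin

(* Along a solution, v(t, x_t) does not increase while the segment x_t stays in the
  \<delta>-ball, by (L1). If |x| ever reached \<delta>, then at the first such time T all values of
  x_T are at most \<delta> = |x(T)|, so x_T lies in S_\<alpha> and (L2) gives v(T, x_T) \<ge> a1 \<delta>^\<gamma>.
  On the other hand |v(0, \<phi>)| is bounded by the left-hand side G of the equation defining
  \<Delta>, evaluated at ||\<phi>||_h < \<Delta>, so v(0, \<phi>) < G(\<Delta>) = a1 \<delta>^\<gamma>. Hence x never leaves
  the \<delta>-ball; the initial function lies in it because \<Delta> < \<delta>, which follows from
  a1 \<le> \<alpha>1, forced by applying (L2) to small constant functions. Inside the ball x is
  uniformly Lipschitz and v is bounded below with derivative at most -c0 |x(t)|^(\<gamma>+\<mu>-1),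
  so if x(t) did not tend to 0, v would drop by a fixed amount infinitely often. *)

(* No integrability assumptions: the integral of a non-integrable function is 0. *)
lemma integral_nonneg_pointwise:
  fixes g :: "'a::euclidean_space \<Rightarrow> real"
  assumes "\<And>x. x \<in> S \<Longrightarrow> 0 \<le> g x"
  shows "0 \<le> integral S g"
  using assms integral_nonneg not_integrable_integral by (metis order_refl)

lemma norm_integral_le_const:
  fixes g :: "real \<Rightarrow> 'b::euclidean_space"
  assumes "a \<le> b" "\<And>x. x \<in> {a..b} \<Longrightarrow> norm (g x) \<le> C"
  shows "norm (integral {a..b} g) \<le> C * (b - a)"
proof (cases "g integrable_on {a..b}")
  case True
  then have "norm (integral {a..b} g) \<le> C * Henstock_Kurzweil_Integration.content {a..b}"
    using assms by (intro has_integral_bound_real[where S="{}"]) (auto intro: order_trans[OF norm_ge_zero])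
  then show ?thesis using assms(1) by simp
next
  case False
  have "0 \<le> C" using assms by (auto intro: order_trans[OF norm_ge_zero])
  then show ?thesis using False assms(1) by (simp add: not_integrable_integral)
qed

lemma decrease_if_derivative_le:
  fixes g :: "real \<Rightarrow> real"
  assumes "a \<le> b" "{a..b} \<subseteq> S"
    and "\<And>s. s \<in> {a..b} \<Longrightarrow> \<exists>D. (g has_real_derivative D) (at s within S) \<and> D \<le> - C"
  shows "g b \<le> g a - C * (b - a)"
proof -
  obtain D where D: "\<And>s. s \<in> {a..b} \<Longrightarrow> (g has_real_derivative D s) (at s within {a..b}) \<and> D s \<le> - C"
    using assms(3) has_field_derivative_subset[OF _ assms(2)] by metis
  obtain s where "s \<in> {a..b}" "g b - g a = D s * (b - a)"
    using mvt_very_simple[OF assms(1), of g "\<lambda>s k. D s * k"] D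
    by (auto simp: has_field_derivative_def mult_commute_abs)
  moreover have "D s * (b - a) \<le> - C * (b - a)"
    using D[OF \<open>s \<in> {a..b}\<close>] assms(1) by (intro mult_right_mono) auto
  ultimately show ?thesis by linarith
qed

lemma norm_diff_le_if_derivative_bounded:
  fixes x :: "real \<Rightarrow> 'a::euclidean_space"
  assumes x': "\<And>s. 0 \<le> s \<Longrightarrow> (x has_vector_derivative x' s) (at s within {0..})"
    and K: "\<And>s. 0 \<le> s \<Longrightarrow> norm (x' s) \<le> K"
    and "0 \<le> a" "a \<le> b"
  shows "norm (x b - x a) \<le> K * (b - a)"
proof -
  have "(x' has_integral x b - x a) {a..b}"
  proof (rule fundamental_theorem_of_calculus[OF \<open>a \<le> b\<close>])
    fix s assume "s \<in> {a..b}"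
    with \<open>0 \<le> a\<close> show "(x has_vector_derivative x' s) (at s within {a..b})"
      by (intro has_vector_derivative_within_subset[OF x']) auto
  qed
  moreover have "0 \<le> K" using order_trans[OF norm_ge_zero K[of 0]] by simp
  ultimately have "norm (x b - x a) \<le> K * Henstock_Kurzweil_Integration.content {a..b}"
    using K \<open>0 \<le> a\<close> by (intro has_integral_bound_real[where S="{}"]) auto
  with \<open>a \<le> b\<close> show ?thesis by simp
qed

lemma unbounded_below_if_uniform_drop:
  fixes v :: "real \<Rightarrow> real"
  assumes "\<eta> > 0" and drop: "\<And>t. 0 \<le> t \<Longrightarrow> \<exists>t'\<ge>0. v t' \<le> v t - \<eta>"
  shows "\<exists>t\<ge>0. v t < L"
proof -
  have iterate: "\<exists>t\<ge>0. v t \<le> v 0 - real n * \<eta>" for n :: nat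
  proof (induction n)
    case 0
    then show ?case by auto
  next
    case (Suc n)
    then obtain t t' where "t \<ge> 0" "v t \<le> v 0 - real n * \<eta>" "t' \<ge> 0" "v t' \<le> v t - \<eta>"
      using drop by blast
    then show ?case by (intro exI[of _ t']) (auto simp: algebra_simps)
  qed
  obtain n :: nat where "v 0 - L < real n * \<eta>"
    using reals_Archimedean3[OF assms(1)] by blast
  with iterate[of n] show ?thesis by force
qed

lemma tendsto_zero_if_dissipative:
  fixes x :: "real \<Rightarrow> 'a::real_normed_vector" and v :: "real \<Rightarrow> real"
  assumes lip: "\<And>a b. 0 \<le> a \<Longrightarrow> a \<le> b \<Longrightarrow> norm (x b - x a) \<le> K * (b - a)"
    and bdd: "\<And>t. 0 \<le> t \<Longrightarrow> L \<le> v t"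
    and dv: "\<And>t. 0 \<le> t \<Longrightarrow>
      \<exists>D. (v has_real_derivative D) (at t within {0..}) \<and> D \<le> - c * norm (x t) powr p"
    and "0 < c" "0 < p"
  shows "(x \<longlongrightarrow> 0) at_top"
proof (rule ccontr)
  assume "\<not> (x \<longlongrightarrow> 0) at_top"
  then obtain e where "e > 0" and large: "\<And>N. \<exists>t\<ge>N. e \<le> norm (x t)"
    unfolding tendsto_iff eventually_at_top_linorder by (force simp: not_less)
  have "0 \<le> K" using order_trans[OF norm_ge_zero lip[of 0 1]] by simp
  define d where "d = e / (2 * (K + 1))"
  define C where "C = c * (e / 2) powr p"
  have "0 < d" "0 < C" using \<open>e > 0\<close> \<open>0 \<le> K\<close> \<open>0 < c\<close> by (auto simp: d_def C_def)
  have "K * d \<le> e / 2"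
    using \<open>e > 0\<close> \<open>0 \<le> K\<close> by (simp add: d_def field_simps)
  have v_antitone: "v b \<le> v a" if "0 \<le> a" "a \<le> b" for a b
  proof -
    have "\<exists>D. (v has_real_derivative D) (at s within {0..}) \<and> D \<le> - 0" if s: "s \<in> {a..b}" for s
    proof -
      obtain D where D: "(v has_real_derivative D) (at s within {0..})" "D \<le> - c * norm (x s) powr p"
        using dv[of s] s \<open>0 \<le> a\<close> by auto
      have "0 \<le> c * norm (x s) powr p" using \<open>0 < c\<close> by simp
      with D show ?thesis by (intro exI[of _ D]) simp
    qed
    then show ?thesis using decrease_if_derivative_le[of a b "{0..}" v 0] that by auto
  qed
  (* Before a late time t' with |x t'| \<ge> e, the Lipschitz bound keeps |x| \<ge> e/2 for a time d. *)
  have drop: "\<exists>t'\<ge>0. v t' \<le> v t - C * d" if "0 \<le> t" for t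
  proof -
    obtain t' where t': "t + d \<le> t'" "e \<le> norm (x t')" using large by blast
    have "\<exists>D. (v has_real_derivative D) (at s within {0..}) \<and> D \<le> - C" if s: "s \<in> {t' - d..t'}" for s
    proof -
      have "norm (x t' - x s) \<le> K * (t' - s)"
        using lip[of s t'] s \<open>0 \<le> t\<close> t'(1) by auto
      also have "\<dots> \<le> K * d" using s \<open>0 \<le> K\<close> by (intro mult_left_mono) auto
      finally have "e / 2 \<le> norm (x s)"
        using \<open>K * d \<le> e / 2\<close> t'(2) norm_triangle_ineq2[of "x t'" "x s"] by linarith
      then have "C \<le> c * norm (x s) powr p"
        unfolding C_def using \<open>e > 0\<close> \<open>0 < c\<close> \<open>0 < p\<close> by (auto intro!: mult_left_mono powr_mono2)
      moreover obtain D where D: "(v has_real_derivative D) (at s within {0..})" "D \<le> - c * norm (x s) powr p"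
        using dv[of s] s \<open>0 \<le> t\<close> \<open>0 < d\<close> t'(1) by auto
      ultimately show ?thesis by (intro exI[of _ D]) simp
    qed
    then have "v t' \<le> v (t' - d) - C * d"
      using decrease_if_derivative_le[of "t' - d" t' "{0..}" v C] \<open>0 \<le> t\<close> t'(1) \<open>0 < d\<close> by auto
    moreover have "v (t' - d) \<le> v t" using v_antitone t'(1) \<open>0 \<le> t\<close> by simp
    ultimately show ?thesis using t'(1) \<open>0 \<le> t\<close> \<open>0 < d\<close> by (intro exI[of _ t']) auto
  qed
  obtain t where "0 \<le> t" "v t < L"
    using unbounded_below_if_uniform_drop[OF mult_pos_pos[OF \<open>0 < C\<close> \<open>0 < d\<close>] drop] by blast
  with bdd show False by (meson not_le)
qed

lemma sum_powr_le:
  fixes y c1 c2 u1 u2 e r :: real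
  assumes "y \<le> c1 * u1 powr e + c2 * u2 powr e"
    and "0 \<le> c1" "0 \<le> c2" "0 \<le> e" "0 \<le> u1" "u1 \<le> r" "0 \<le> u2" "u2 \<le> r"
  shows "y \<le> (c1 + c2) * r powr e"
proof -
  have "c1 * u1 powr e \<le> c1 * r powr e" "c2 * u2 powr e \<le> c2 * r powr e"
    using assms by (auto intro!: mult_left_mono powr_mono2)
  with assms(1) show ?thesis by (simp add: distrib_right)
qed

lemma sum_powr_strict_mono:
  fixes r s \<alpha>1 b c \<gamma> p q :: real
  assumes "0 \<le> r" "r < s" "0 < \<alpha>1" "0 \<le> b" "0 \<le> c" "0 < \<gamma>" "0 \<le> p" "0 \<le> q"
  shows "\<alpha>1 * r powr \<gamma> + b * r powr p + c * r powr q < \<alpha>1 * s powr \<gamma> + b * s powr p + c * s powr q"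
  using assms by (intro add_less_le_mono mult_strict_left_mono powr_less_mono2 mult_left_mono powr_mono2) auto

lemma coefficient_le_if_dominated_near_zero:
  fixes a \<alpha> b c \<gamma> p q \<delta> :: real
  assumes "\<gamma> < p" "\<gamma> < q" "0 < \<delta>"
    and dominated: "\<And>r. 0 < r \<Longrightarrow> r \<le> \<delta> \<Longrightarrow> a * r powr \<gamma> \<le> \<alpha> * r powr \<gamma> + b * r powr p + c * r powr q"
  shows "a \<le> \<alpha>"
proof (rule tendsto_le[of "at_right 0"])
  have lim: "((\<lambda>r. r powr e) \<longlongrightarrow> 0) (at_right (0::real))" if "0 < e" for e
    using that by (intro tendsto_zero_powrI tendsto_ident_at tendsto_const)
       (auto simp: eventually_at_right_field intro: exI[of _ 1])
  show "((\<lambda>r. \<alpha> + b * r powr (p - \<gamma>) + c * r powr (q - \<gamma>)) \<longlongrightarrow> \<alpha>) (at_right 0)"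
    using tendsto_add[OF tendsto_add[OF tendsto_const tendsto_mult_right_zero] tendsto_mult_right_zero,
        OF lim lim] assms(1,2) by simp
  show "\<forall>\<^sub>F r in at_right 0. a \<le> \<alpha> + b * r powr (p - \<gamma>) + c * r powr (q - \<gamma>)"
    unfolding eventually_at_right_field
  proof (intro exI[of _ \<delta>] conjI allI impI)
    fix r :: real assume "0 < r" "r < \<delta>"
    then have "a * r powr \<gamma> \<le> (\<alpha> + b * r powr (p - \<gamma>) + c * r powr (q - \<gamma>)) * r powr \<gamma>"
      using dominated[of r] by (simp add: powr_diff algebra_simps)
    with \<open>0 < r\<close> show "a \<le> \<alpha> + b * r powr (p - \<gamma>) + c * r powr (q - \<gamma>)" by simp
  qed (use \<open>0 < \<delta>\<close> in simp)
qed auto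

lemma root_less_radius:
  fixes \<alpha>1 b c a \<gamma> p q \<delta> \<Delta> :: real
  assumes root: "\<alpha>1 * \<Delta> powr \<gamma> + b * \<Delta> powr p + c * \<Delta> powr q = a * \<delta> powr \<gamma>"
    and "a \<le> \<alpha>1" "0 \<le> \<alpha>1" "0 < b" "0 \<le> c" "0 < \<delta>" "0 \<le> \<gamma>" "0 \<le> p" "0 \<le> q"
  shows "\<Delta> < \<delta>"
proof (rule ccontr)
  assume "\<not> \<Delta> < \<delta>"
  then have "\<alpha>1 * \<delta> powr \<gamma> + b * \<delta> powr p + c * \<delta> powr q \<le> a * \<delta> powr \<gamma>"
    unfolding root[symmetric] using assms by (intro add_mono mult_left_mono powr_mono2) auto
  moreover have "0 < b * \<delta> powr p" "0 \<le> c * \<delta> powr q" "a * \<delta> powr \<gamma> \<le> \<alpha>1 * \<delta> powr \<gamma>"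
    using assms by (auto intro: mult_right_mono)
  ultimately show False by linarith
qed

lemma norm_le_hnorm:
  assumes "Cfun h \<phi>" "\<theta> \<in> {-h..0}"
  shows "norm (\<phi> \<theta>) \<le> hnorm h \<phi>"
proof -
  have "compact ((\<lambda>\<theta>. norm (\<phi> \<theta>)) ` {-h..0})"
    using assms(1) unfolding Cfun_def by (intro compact_continuous_image continuous_intros) auto
  then have "bdd_above ((\<lambda>\<theta>. norm (\<phi> \<theta>)) ` {-h..0})"
    by (meson bounded_imp_bdd_above compact_imp_bounded)
  with assms(2) show ?thesis unfolding hnorm_def by (intro cSup_upper) auto
qed

lemma hnorm_le:
  assumes "0 \<le> h" "\<And>\<theta>. \<theta> \<in> {-h..0} \<Longrightarrow> norm (\<phi> \<theta>) \<le> c"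
  shows "hnorm h \<phi> \<le> c"
  unfolding hnorm_def using assms by (intro cSup_least) auto

lemma hnorm_seg_le:
  assumes "0 \<le> h" "\<And>s. t - h \<le> s \<Longrightarrow> s \<le> t \<Longrightarrow> norm (x s) \<le> c"
  shows "hnorm h (seg x t) \<le> c"
  using assms by (intro hnorm_le) (auto simp: seg_def)

lemma Cfun_seg:
  assumes "continuous_on {-h..} x" "0 \<le> t"
  shows "Cfun h (seg x t)"
  unfolding Cfun_def seg_def
  by (rule continuous_on_compose2[OF assms(1), where f="\<lambda>\<theta>. t + \<theta>"])
     (use assms(2) in \<open>auto intro: continuous_intros\<close>)

lemma first_exit_time:
  fixes x :: "real \<Rightarrow> 'a::real_normed_vector"
  assumes "0 < h" "continuous_on {-h..} x" "-h \<le> s" "\<delta> \<le> norm (x s)"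
    and init: "\<And>\<theta>. \<theta> \<in> {-h..0} \<Longrightarrow> norm (x \<theta>) < \<delta>"
  obtains T where "0 < T" "norm (x T) = \<delta>" "\<And>r. r \<in> {-h..<T} \<Longrightarrow> norm (x r) < \<delta>"
proof -
  define A where "A = {-h..} \<inter> (\<lambda>s. norm (x s)) -` {\<delta>..}"
  have "closed A"
    unfolding A_def using assms(2) by (intro continuous_closed_preimage) (auto intro: continuous_intros)
  moreover have "s \<in> A" "bdd_below A"
    using assms(3,4) unfolding A_def by (auto intro: bdd_belowI[of _ "-h"])
  ultimately have "Inf A \<in> A" using closed_contains_Inf by blast
  define T where "T = Inf A"
  have before: "norm (x r) < \<delta>" if "r \<in> {-h..<T}" for r
    using that cInf_lower[OF _ \<open>bdd_below A\<close>, of r] unfolding A_def T_def by force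
  have "0 < T"
    using \<open>Inf A \<in> A\<close> init[of T] unfolding A_def T_def by force
  have closure: "closure {-h..<T} = {-h..T}"
    using \<open>0 < h\<close> \<open>0 < T\<close> by (intro closure_atLeastLessThan) auto
  have "continuous_on (closure {-h..<T}) x"
    unfolding closure by (rule continuous_on_subset[OF assms(2)]) auto
  then have "norm (x T) \<le> \<delta>"
    using before closure \<open>0 < h\<close> \<open>0 < T\<close>
    by (intro continuous_on_closure_norm_le[of "{-h..<T}" x]) (auto intro: less_imp_le)
  with \<open>Inf A \<in> A\<close> have "norm (x T) = \<delta>" unfolding A_def T_def by auto
  with that \<open>0 < T\<close> before show ?thesis by blast
qed

lemma norm_rhs_le:
  fixes f Q :: "'a::real_normed_vector \<Rightarrow> 'a \<Rightarrow> 'a" and L :: "'a \<Rightarrow>\<^sub>L 'a"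
  assumes f_bound: "\<And>x1 x2. norm (f x1 x2) \<le> m1 * norm x1 powr \<mu> + m2 * norm x2 powr \<mu>"
    and Q_bound: "\<And>x1 x2. norm (Q x1 x2) \<le> p1 * norm x1 powr \<sigma> + p2 * norm x2 powr \<sigma>"
    and "0 \<le> m1" "0 \<le> m2" "0 \<le> \<mu>" "0 \<le> p1" "0 \<le> p2" "0 \<le> \<sigma>"
    and "norm L \<le> bh" "norm x1 \<le> r" "norm x2 \<le> r"
  shows "norm (f x1 x2 + blinfun_apply L (Q x1 x2)) \<le> (m1 + m2) * r powr \<mu> + bh * ((p1 + p2) * r powr \<sigma>)"
proof -
  have "norm (f x1 x2) \<le> (m1 + m2) * r powr \<mu>"
    using assms by (intro sum_powr_le[OF f_bound]) auto
  moreover have "norm (Q x1 x2) \<le> (p1 + p2) * r powr \<sigma>"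
    using assms by (intro sum_powr_le[OF Q_bound]) auto
  then have "norm (blinfun_apply L (Q x1 x2)) \<le> bh * ((p1 + p2) * r powr \<sigma>)"
    using \<open>norm L \<le> bh\<close> order_trans[OF norm_ge_zero \<open>norm L \<le> bh\<close>]
    by (intro order_trans[OF norm_blinfun] mult_mono) auto
  ultimately show ?thesis
    using norm_triangle_ineq[of "f x1 x2" "blinfun_apply L (Q x1 x2)"] by linarith
qed

lemma norm_Lmat_le:
  fixes B :: "real \<Rightarrow> 'a::euclidean_space \<Rightarrow>\<^sub>L 'a"
  assumes "0 < \<epsilon>" "0 \<le> t + h" and B_bound: "\<And>t. 0 \<le> t \<Longrightarrow> norm (B t) \<le> bh"
  shows "norm (Lmat h B \<epsilon> t) \<le> bh / \<epsilon>"
proof -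
  define T where "T = t + h"
  define F where "F s = bh * exp (- \<epsilon> * (T - s)) / \<epsilon>" for s
  have "0 \<le> bh" using order_trans[OF norm_ge_zero B_bound[of 0]] by simp
  have majorant: "((\<lambda>s. bh * exp (- \<epsilon> * (T - s))) has_integral F T - F 0) {0..T}"
  proof (rule fundamental_theorem_of_calculus)
    show "0 \<le> T" using assms(2) by (simp add: T_def)
    fix s
    show "(F has_vector_derivative bh * exp (- \<epsilon> * (T - s))) (at s within {0..T})"
      unfolding F_def has_real_derivative_iff_has_vector_derivative[symmetric]
      using \<open>0 < \<epsilon>\<close> by (auto intro!: derivative_eq_intros simp: field_simps)
  qed
  moreover have "F T - F 0 \<le> bh / \<epsilon>"
    unfolding F_def using \<open>0 < \<epsilon>\<close> \<open>0 \<le> bh\<close> by (simp add: divide_right_mono)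
  ultimately have bound: "integral {0..T} (\<lambda>s. bh * exp (- \<epsilon> * (T - s))) \<le> bh / \<epsilon>"
    by (metis integral_unique)
  show ?thesis
  proof (cases "(\<lambda>s. exp (- \<epsilon> * (T - s)) *\<^sub>R B s) integrable_on {0..T}")
    case True
    have "norm (Lmat h B \<epsilon> t) \<le> integral {0..T} (\<lambda>s. bh * exp (- \<epsilon> * (T - s)))"
      unfolding Lmat_def T_def[symmetric] using True majorant B_bound
      by (intro integral_norm_bound_integral) (auto simp: mult_commute_abs mult_left_mono)
    with bound show ?thesis by linarith
  next
    case False
    then show ?thesis using \<open>0 < \<epsilon>\<close> \<open>0 \<le> bh\<close>
      by (simp add: Lmat_def T_def not_integrable_integral)
  qed
qed

lemma norm_Lmat_le_omega:
  fixes B :: "real \<Rightarrow> 'a::euclidean_space \<Rightarrow>\<^sub>L 'a"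
  assumes "0 < \<epsilon>" "0 \<le> h" "0 \<le> t" and B_bound: "\<And>t. 0 \<le> t \<Longrightarrow> norm (B t) \<le> bh"
  shows "norm (Lmat h B \<epsilon> t) \<le> omega h B \<epsilon> / \<epsilon>"
proof -
  have "bdd_above ((\<lambda>t. \<epsilon> * norm (Lmat h B \<epsilon> t)) ` {0..})"
    using norm_Lmat_le[OF \<open>0 < \<epsilon>\<close> _ B_bound] \<open>0 < \<epsilon>\<close> \<open>0 \<le> h\<close>
    by (intro bdd_aboveI2[of _ _ bh]) (auto simp: field_simps)
  then have "\<epsilon> * norm (Lmat h B \<epsilon> t) \<le> omega h B \<epsilon>"
    unfolding omega_def using \<open>0 \<le> t\<close> by (intro cSup_upper) auto
  with \<open>0 < \<epsilon>\<close> show ?thesis by (simp add: field_simps)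
qed

lemma abs_vfun_le:
  fixes f Q :: "'a::euclidean_space \<Rightarrow> 'a \<Rightarrow> 'a" and B :: "real \<Rightarrow> 'a \<Rightarrow>\<^sub>L 'a"
    and V :: "'a \<Rightarrow> real" and gV :: "'a \<Rightarrow> 'a"
  assumes "0 < h" "0 \<le> r" "0 \<le> t" and \<psi>: "\<forall>\<theta>\<in>{-h..0}. norm (\<psi> \<theta>) \<le> r"
    and f_bound: "\<And>x1 x2. norm (f x1 x2) \<le> m1 * norm x1 powr \<mu> + m2 * norm x2 powr \<mu>"
    and B_bound: "\<And>t. 0 \<le> t \<Longrightarrow> norm (B t) \<le> bh"
    and Q_bound: "\<And>x1 x2. norm (Q x1 x2) \<le> p1 * norm x1 powr \<sigma> + p2 * norm x2 powr \<sigma>"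
    and V_bounds: "\<And>x. 0 \<le> V x" "\<And>x. V x \<le> \<alpha>1 * norm x powr \<gamma>"
    and gV_bound: "\<And>x. norm (gV x) \<le> \<beta> * norm x powr (\<gamma> - 1)"
    and Lmat_bound: "norm (Lmat h B \<epsilon> t) \<le> \<kappa>"
    and f_consts: "0 \<le> m1" "0 \<le> m2" "0 \<le> \<mu>" and Q_consts: "0 \<le> p1" "0 \<le> p2" "0 \<le> \<sigma>"
    and "0 \<le> \<alpha>1" "0 \<le> \<beta>" "1 \<le> \<gamma>" "0 \<le> w1" "0 \<le> w2"
  shows "\<bar>vfun h f B Q V gV w1 w2 \<gamma> \<mu> \<epsilon> t \<psi>\<bar> \<le> \<alpha>1 * r powr \<gamma>
        + ((\<beta> * (m1 + m2) + w1 + h * w2) * h) * r powr (\<gamma> + \<mu> - 1)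
        + (\<beta> * (p1 + p2) * (bh * h + \<kappa>)) * r powr (\<gamma> + \<sigma> - 1)"
proof -
  define a where "a = \<psi> 0"
  define R where "R = (m1 + m2) * r powr \<mu> + bh * ((p1 + p2) * r powr \<sigma>)"
  define I where "I = integral {-h..0} (\<lambda>\<theta>. f a (\<psi> \<theta>) + blinfun_apply (B (t + \<theta> + h)) (Q a (\<psi> \<theta>)))"
  define LQ where "LQ = blinfun_apply (Lmat h B \<epsilon> t) (Q a a)"
  define W where "W = integral {-h..0} (\<lambda>\<theta>. (w1 + (h + \<theta>) * w2) * norm (\<psi> \<theta>) powr (\<gamma> + \<mu> - 1))"
  have v: "vfun h f B Q V gV w1 w2 \<gamma> \<mu> \<epsilon> t \<psi> = V a + inner (gV a) (I - LQ) + W"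
    unfolding vfun_def a_def I_def LQ_def W_def by simp
  have a: "norm a \<le> r" using \<psi> \<open>0 < h\<close> by (simp add: a_def)
  have "norm I \<le> R * (0 - - h)"
    unfolding I_def R_def using \<open>0 < h\<close> \<open>0 \<le> t\<close> \<psi> a f_consts Q_consts
    by (intro norm_integral_le_const norm_rhs_le[OF f_bound Q_bound] B_bound) auto
  moreover have "norm LQ \<le> \<kappa> * ((p1 + p2) * r powr \<sigma>)"
    unfolding LQ_def using Lmat_bound a f_consts Q_consts order_trans[OF norm_ge_zero Lmat_bound]
    by (intro order_trans[OF norm_blinfun] mult_mono sum_powr_le[OF Q_bound]) auto
  ultimately have "norm (I - LQ) \<le> R * h + \<kappa> * ((p1 + p2) * r powr \<sigma>)"
    using norm_triangle_ineq4[of I LQ] by simp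
  moreover have "norm (gV a) \<le> \<beta> * r powr (\<gamma> - 1)"
    using a \<open>0 \<le> \<beta>\<close> \<open>1 \<le> \<gamma>\<close> by (intro order_trans[OF gV_bound] mult_left_mono powr_mono2) auto
  ultimately have "\<bar>inner (gV a) (I - LQ)\<bar> \<le> \<beta> * r powr (\<gamma> - 1) * (R * h + \<kappa> * ((p1 + p2) * r powr \<sigma>))"
    using \<open>0 \<le> \<beta>\<close> by (intro order_trans[OF Cauchy_Schwarz_ineq2] mult_mono) auto
  also have "\<dots> = (\<beta> * (m1 + m2) * h) * r powr (\<gamma> + \<mu> - 1)
      + (\<beta> * (p1 + p2) * (bh * h + \<kappa>)) * r powr (\<gamma> + \<sigma> - 1)"
    unfolding R_def by (simp add: powr_add[symmetric] algebra_simps)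
  finally have inner: "\<bar>inner (gV a) (I - LQ)\<bar> \<le> \<dots>" .
  have "0 \<le> W"
    unfolding W_def using \<open>0 \<le> w1\<close> \<open>0 \<le> w2\<close> by (intro integral_nonneg_pointwise) auto
  moreover have "norm W \<le> (w1 + h * w2) * r powr (\<gamma> + \<mu> - 1) * (0 - - h)"
    unfolding W_def using \<open>0 < h\<close> \<psi> \<open>0 \<le> w1\<close> \<open>0 \<le> w2\<close> \<open>0 \<le> \<mu>\<close> \<open>1 \<le> \<gamma>\<close>
    by (intro norm_integral_le_const) (auto intro!: mult_mono powr_mono2)
  moreover have "V a \<le> \<alpha>1 * r powr \<gamma>"
    using a \<open>0 \<le> \<alpha>1\<close> \<open>1 \<le> \<gamma>\<close> by (intro order_trans[OF V_bounds(2)] mult_left_mono powr_mono2) auto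
  ultimately show ?thesis
    unfolding v using inner V_bounds(1)[of a] \<open>0 < h\<close> by (simp add: abs_le_iff algebra_simps)
qed

lemma lower_coefficient_le_upper_coefficient:
  fixes v :: "(real \<Rightarrow> 'a::{real_normed_vector,perfect_space}) \<Rightarrow> real"
  assumes "0 \<le> h" "1 \<le> \<alpha>" "0 < \<delta>" "\<gamma> < p" "\<gamma> < q"
    and lower: "\<And>\<phi>. in_S h \<alpha> \<phi> \<Longrightarrow> hnorm h \<phi> \<le> \<delta> \<Longrightarrow> a * norm (\<phi> 0) powr \<gamma> \<le> v \<phi>"
    and upper: "\<And>\<phi> r. 0 \<le> r \<Longrightarrow> \<forall>\<theta>\<in>{-h..0}. norm (\<phi> \<theta>) \<le> r \<Longrightarrow>
      v \<phi> \<le> \<alpha>1 * r powr \<gamma> + b * r powr p + c * r powr q"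
  shows "a \<le> \<alpha>1"
proof (rule coefficient_le_if_dominated_near_zero[OF assms(4,5,3)])
  fix r :: real assume "0 < r" "r \<le> \<delta>"
  obtain u :: 'a where u: "norm u = r" using vector_choose_size \<open>0 < r\<close> by (metis less_imp_le)
  have "in_S h \<alpha> (\<lambda>_. u)"
    unfolding in_S_def Cfun_def using u \<open>0 < r\<close> \<open>1 \<le> \<alpha>\<close> by auto
  moreover have "hnorm h (\<lambda>_. u) \<le> \<delta>" using hnorm_le[OF \<open>0 \<le> h\<close>] u \<open>r \<le> \<delta>\<close> by auto
  ultimately have "a * r powr \<gamma> \<le> v (\<lambda>_. u)" using lower u by fastforce
  also have "\<dots> \<le> \<alpha>1 * r powr \<gamma> + b * r powr p + c * r powr q" using upper[of r] u \<open>0 < r\<close> by simp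
  finally show "a * r powr \<gamma> \<le> \<alpha>1 * r powr \<gamma> + b * r powr p + c * r powr q" .
qed

lemma start_below_level:
  fixes v :: "(real \<Rightarrow> 'a::{real_normed_vector,perfect_space}) \<Rightarrow> real"
  assumes "0 \<le> h" "1 \<le> \<alpha>" "0 < \<delta>" and exps: "0 < \<gamma>" "\<gamma> < p" "\<gamma> < q"
    and coeffs: "0 < \<alpha>1" "0 < b" "0 \<le> c"
    and lower: "\<And>\<phi>. in_S h \<alpha> \<phi> \<Longrightarrow> hnorm h \<phi> \<le> \<delta> \<Longrightarrow> a * norm (\<phi> 0) powr \<gamma> \<le> v \<phi>"
    and upper: "\<And>\<phi> r. 0 \<le> r \<Longrightarrow> \<forall>\<theta>\<in>{-h..0}. norm (\<phi> \<theta>) \<le> r \<Longrightarrow>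
      v \<phi> \<le> \<alpha>1 * r powr \<gamma> + b * r powr p + c * r powr q"
    and root: "\<alpha>1 * \<Delta> powr \<gamma> + b * \<Delta> powr p + c * \<Delta> powr q = a * \<delta> powr \<gamma>"
    and r: "0 \<le> r" "r < \<Delta>" and \<psi>: "\<forall>\<theta>\<in>{-h..0}. norm (\<psi> \<theta>) \<le> r"
  shows "\<Delta> < \<delta>" "v \<psi> < a * \<delta> powr \<gamma>"
proof -
  have "a \<le> \<alpha>1"
    using assms(1-3) exps(2,3) lower upper by (rule lower_coefficient_le_upper_coefficient)
  with \<open>0 < \<delta>\<close> exps coeffs show "\<Delta> < \<delta>" by (intro root_less_radius[OF root]) auto
  have "v \<psi> \<le> \<alpha>1 * r powr \<gamma> + b * r powr p + c * r powr q"
    using upper r(1) \<psi> by blast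
  also have "\<dots> < \<alpha>1 * \<Delta> powr \<gamma> + b * \<Delta> powr p + c * \<Delta> powr q"
    using exps coeffs r by (intro sum_powr_strict_mono) auto
  finally show "v \<psi> < a * \<delta> powr \<gamma>" unfolding root .
qed

lemma stays_in_ball:
  fixes x :: "real \<Rightarrow> 'a::real_normed_vector" and v :: "real \<Rightarrow> (real \<Rightarrow> 'a) \<Rightarrow> real"
  assumes "0 < h" "1 \<le> \<alpha>" and x_cont: "continuous_on {-h..} x"
    and init: "\<And>\<theta>. \<theta> \<in> {-h..0} \<Longrightarrow> norm (x \<theta>) < \<delta>"
    and dv: "\<And>t. 0 \<le> t \<Longrightarrow> hnorm h (seg x t) \<le> \<delta> \<Longrightarrow>
      \<exists>D. ((\<lambda>\<tau>. v \<tau> (seg x \<tau>)) has_real_derivative D) (at t within {0..}) \<and> D \<le> 0"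
    and lower: "\<And>t \<phi>. 0 \<le> t \<Longrightarrow> in_S h \<alpha> \<phi> \<Longrightarrow> hnorm h \<phi> \<le> \<delta> \<Longrightarrow> a * norm (\<phi> 0) powr \<gamma> \<le> v t \<phi>"
    and start: "v 0 (seg x 0) < a * \<delta> powr \<gamma>"
    and "-h \<le> s"
  shows "norm (x s) < \<delta>"
proof (rule ccontr)
  assume "\<not> norm (x s) < \<delta>"
  then have "\<delta> \<le> norm (x s)" by simp
  then obtain T where "0 < T" "norm (x T) = \<delta>" and before: "\<And>r. r \<in> {-h..<T} \<Longrightarrow> norm (x r) < \<delta>"
    using first_exit_time[OF \<open>0 < h\<close> x_cont \<open>-h \<le> s\<close> _ init] by blast
  have inside: "hnorm h (seg x t) \<le> \<delta>" if "t \<in> {0..T}" for t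
  proof (rule hnorm_seg_le)
    fix r assume "t - h \<le> r" "r \<le> t"
    with that before[of r] \<open>norm (x T) = \<delta>\<close> show "norm (x r) \<le> \<delta>" by (cases "r = T") auto
  qed (use \<open>0 < h\<close> in simp)
  have "v T (seg x T) \<le> v 0 (seg x 0) - 0 * (T - 0)"
    using \<open>0 < T\<close> dv inside
    by (intro decrease_if_derivative_le[where g="\<lambda>\<tau>. v \<tau> (seg x \<tau>)" and S="{0..}"]) auto
  moreover have "in_S h \<alpha> (seg x T)"
    unfolding in_S_def
  proof (intro conjI ballI)
    show "Cfun h (seg x T)" using Cfun_seg[OF x_cont] \<open>0 < T\<close> by simp
    fix \<theta> assume "\<theta> \<in> {-h..0}"
    then have "norm (seg x T \<theta>) \<le> norm (seg x T 0)"
      using before[of "T + \<theta>"] \<open>norm (x T) = \<delta>\<close> \<open>0 < T\<close>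
      by (cases "\<theta> = 0") (auto simp: seg_def)
    also have "\<dots> \<le> \<alpha> * norm (seg x T 0)" using \<open>1 \<le> \<alpha>\<close> by (simp add: mult_le_cancel_right1)
    finally show "norm (seg x T \<theta>) \<le> \<alpha> * norm (seg x T 0)" .
  qed
  then have "a * \<delta> powr \<gamma> \<le> v T (seg x T)"
    using lower[of T "seg x T"] inside[of T] \<open>0 < T\<close> \<open>norm (x T) = \<delta>\<close> by (simp add: seg_def)
  ultimately show False using start by linarith
qed

lemma attractive_if_Lyapunov_Krasovskii:
  fixes x x' :: "real \<Rightarrow> 'a::euclidean_space" and v :: "real \<Rightarrow> (real \<Rightarrow> 'a) \<Rightarrow> real"
  assumes "0 < h" "1 \<le> \<alpha>" "0 < c0" "0 \<le> c1" "0 \<le> c2" "0 < p"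
    and x_cont: "continuous_on {-h..} x"
    and x_der: "\<And>t. 0 \<le> t \<Longrightarrow> (x has_vector_derivative x' t) (at t within {0..})"
    and x'_bound: "\<And>t. 0 \<le> t \<Longrightarrow> norm (x t) \<le> \<delta> \<Longrightarrow> norm (x (t - h)) \<le> \<delta> \<Longrightarrow> norm (x' t) \<le> K"
    and init: "\<And>\<theta>. \<theta> \<in> {-h..0} \<Longrightarrow> norm (x \<theta>) < \<delta>"
    and dv: "\<And>t. 0 \<le> t \<Longrightarrow> hnorm h (seg x t) \<le> \<delta> \<Longrightarrow>
      \<exists>D. ((\<lambda>\<tau>. v \<tau> (seg x \<tau>)) has_real_derivative D) (at t within {0..})
        \<and> D \<le> - c0 * norm (x t) powr p - c1 * norm (x (t - h)) powr p
             - c2 * integral {-h..0} (\<lambda>\<theta>. norm (x (t + \<theta>)) powr p)"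
    and lower: "\<And>t \<phi>. 0 \<le> t \<Longrightarrow> in_S h \<alpha> \<phi> \<Longrightarrow> hnorm h \<phi> \<le> \<delta> \<Longrightarrow> a * norm (\<phi> 0) powr \<gamma> \<le> v t \<phi>"
    and bounded: "\<And>t \<phi>. 0 \<le> t \<Longrightarrow> \<forall>\<theta>\<in>{-h..0}. norm (\<phi> \<theta>) \<le> \<delta> \<Longrightarrow> U \<le> v t \<phi>"
    and start: "v 0 (seg x 0) < a * \<delta> powr \<gamma>"
  shows "(x \<longlongrightarrow> 0) at_top \<and> (\<forall>t\<ge>0. hnorm h (seg x t) \<le> \<delta>)"
proof -
  have dissipation: "\<exists>D. ((\<lambda>\<tau>. v \<tau> (seg x \<tau>)) has_real_derivative D) (at t within {0..})
      \<and> D \<le> - c0 * norm (x t) powr p" if t: "0 \<le> t" "hnorm h (seg x t) \<le> \<delta>" for t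
  proof -
    obtain D where D: "((\<lambda>\<tau>. v \<tau> (seg x \<tau>)) has_real_derivative D) (at t within {0..})"
      "D \<le> - c0 * norm (x t) powr p - c1 * norm (x (t - h)) powr p
         - c2 * integral {-h..0} (\<lambda>\<theta>. norm (x (t + \<theta>)) powr p)"
      using dv[OF t] by blast
    have "0 \<le> c1 * norm (x (t - h)) powr p + c2 * integral {-h..0} (\<lambda>\<theta>. norm (x (t + \<theta>)) powr p)"
      using \<open>0 \<le> c1\<close> \<open>0 \<le> c2\<close> by (auto intro!: add_nonneg_nonneg mult_nonneg_nonneg integral_nonneg_pointwise)
    with D show ?thesis by (intro exI[of _ D]) auto
  qed
  have in_ball: "norm (x s) < \<delta>" if "-h \<le> s" for s
  proof (rule stays_in_ball[where v=v, OF \<open>0 < h\<close> \<open>1 \<le> \<alpha>\<close> x_cont init _ lower start that])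
    show "\<exists>D. ((\<lambda>\<tau>. v \<tau> (seg x \<tau>)) has_real_derivative D) (at t within {0..}) \<and> D \<le> 0"
      if t: "0 \<le> t" "hnorm h (seg x t) \<le> \<delta>" for t
    proof -
      obtain D where "((\<lambda>\<tau>. v \<tau> (seg x \<tau>)) has_real_derivative D) (at t within {0..})"
        "D \<le> - c0 * norm (x t) powr p"
        using dissipation[OF t] by blast
      moreover have "0 \<le> c0 * norm (x t) powr p" using \<open>0 < c0\<close> by simp
      ultimately show ?thesis by (intro exI[of _ D]) simp
    qed
  qed
  have seg_le: "hnorm h (seg x t) \<le> \<delta>" if "0 \<le> t" for t
    using \<open>0 < h\<close> in_ball that by (intro hnorm_seg_le) (auto intro: less_imp_le)
  moreover have "(x \<longlongrightarrow> 0) at_top"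
  proof (rule tendsto_zero_if_dissipative)
    show "norm (x b - x a) \<le> K * (b - a)" if "0 \<le> a" "a \<le> b" for a b
      using that in_ball \<open>0 < h\<close>
      by (intro norm_diff_le_if_derivative_bounded[OF x_der] x'_bound) (auto intro: less_imp_le)
    show "U \<le> v t (seg x t)" if "0 \<le> t" for t
    proof (rule bounded[OF that])
      show "\<forall>\<theta>\<in>{-h..0}. norm (seg x t \<theta>) \<le> \<delta>"
        using in_ball that by (auto simp: seg_def intro: less_imp_le)
    qed
    show "\<exists>D. ((\<lambda>\<tau>. v \<tau> (seg x \<tau>)) has_real_derivative D) (at t within {0..})
      \<and> D \<le> - c0 * norm (x t) powr p" if "0 \<le> t" for t
      using dissipation[OF that seg_le[OF that]] .
  qed (use \<open>0 < c0\<close> \<open>0 < p\<close> in auto)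
  ultimately show ?thesis by blast
qed

theorem theorem2:
  fixes h :: real
    and f Q :: "'a::euclidean_space \<Rightarrow> 'a \<Rightarrow> 'a"
    and F1 F2 Q1 Q2 :: "'a \<Rightarrow> 'a \<Rightarrow> 'a \<Rightarrow>\<^sub>L 'a"
    and B :: "real \<Rightarrow> 'a \<Rightarrow>\<^sub>L 'a"
    and V :: "'a \<Rightarrow> real" and gV :: "'a \<Rightarrow> 'a" and HV :: "'a \<Rightarrow> 'a \<Rightarrow>\<^sub>L 'a"
    and \<mu> \<sigma> \<gamma> m1 m2 \<eta>11 \<eta>12 p1 p2 q11 q12 q21 q22 bh :: real
    and w \<alpha>0 \<alpha>1 \<beta> \<psi> w1 w2 \<epsilon> \<kappa> :: real
    and \<alpha> \<delta> c0 c1 c2 a1 \<Delta> :: real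
  assumes h_pos: "h > 0"
    and f_lip: "locally_lipschitz2 f"
    and f_C1: "C1_2 f F1 F2"
    and \<mu>_gt: "\<mu> > 1"
    and f_hom: "\<And>c x1 x2. c > 0 \<Longrightarrow> f (c *\<^sub>R x1) (c *\<^sub>R x2) = (c powr \<mu>) *\<^sub>R f x1 x2"
    and f_consts: "m1 \<ge> 0" "m2 \<ge> 0" "\<eta>11 \<ge> 0" "\<eta>12 \<ge> 0"
    and f_bound: "\<And>x1 x2. norm (f x1 x2) \<le> m1 * norm x1 powr \<mu> + m2 * norm x2 powr \<mu>"
    and F1_bound: "\<And>x1 x2. norm (F1 x1 x2) \<le> \<eta>11 * norm x1 powr (\<mu> - 1) + \<eta>12 * norm x2 powr (\<mu> - 1)"
    and B_cont: "continuous_on {0..} B"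
    and B_bound: "\<And>t. t \<ge> 0 \<Longrightarrow> norm (B t) \<le> bh"
    and Q_C1: "C1_2 Q Q1 Q2"
    and \<sigma>_gt: "\<sigma> > 1"
    and Q_consts: "p1 \<ge> 0" "p2 \<ge> 0" "q11 \<ge> 0" "q12 \<ge> 0" "q21 \<ge> 0" "q22 \<ge> 0"
    and Q_bound: "\<And>x1 x2. norm (Q x1 x2) \<le> p1 * norm x1 powr \<sigma> + p2 * norm x2 powr \<sigma>"
    and Q1_bound: "\<And>x1 x2. norm (Q1 x1 x2) \<le> q11 * norm x1 powr (\<sigma> - 1) + q12 * norm x2 powr (\<sigma> - 1)"
    and Q2_bound: "\<And>x1 x2. norm (Q2 x1 x2) \<le> q21 * norm x1 powr (\<sigma> - 1) + q22 * norm x2 powr (\<sigma> - 1)"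
    and delayfree_stable: "asym_stable (\<lambda>x. f x x)"
    and V_posdef: "V 0 = 0" "\<And>x. x \<noteq> 0 \<Longrightarrow> V x > 0"
    and V_deriv: "\<And>x. (V has_derivative (\<lambda>y. inner (gV x) y)) (at x)"
    and gV_deriv: "\<And>x. (gV has_derivative blinfun_apply (HV x)) (at x)"
    and HV_cont: "continuous_on UNIV HV"
    and \<gamma>_ge: "\<gamma> \<ge> 2"
    and V_hom: "\<And>c x. c > 0 \<Longrightarrow> V (c *\<^sub>R x) = c powr \<gamma> * V x"
    and V_consts: "w > 0" "\<alpha>0 > 0" "\<alpha>1 > 0" "\<beta> > 0" "\<psi> > 0"
    and V_decr: "\<And>x. inner (gV x) (f x x) \<le> - w * norm x powr (\<gamma> + \<mu> - 1)"
    and V_bounds: "\<And>x. \<alpha>0 * norm x powr \<gamma> \<le> V x" "\<And>x. V x \<le> \<alpha>1 * norm x powr \<gamma>"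
    and gV_bound: "\<And>x. norm (gV x) \<le> \<beta> * norm x powr (\<gamma> - 1)"
    and HV_bound: "\<And>x. norm (HV x) \<le> \<psi> * (if \<gamma> = 2 then 1 else norm x powr (\<gamma> - 2))"
    and cases_ab:
      "(\<epsilon> = 0 \<and> (\<exists>M. \<forall>t\<ge>0. norm (integral {0..t} B) \<le> M) \<and> \<sigma> > (\<mu> + 1) / 2 \<and>
          \<kappa> > 0 \<and> (\<forall>t\<ge>0. norm (Lmat h B 0 t) \<le> \<kappa>))
       \<or> (\<epsilon> > 0 \<and> (\<forall>e>0. \<exists>T0. \<forall>T\<ge>T0. \<forall>t\<ge>0. norm ((1 / T) *\<^sub>R integral {t..t + T} B) \<le> e) \<and>
          \<sigma> \<ge> \<mu> \<and> \<kappa> = omega h B \<epsilon> / \<epsilon>)"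
    and w12: "w1 > 0" "w2 > 0" "w - w1 - h * w2 > 0"
    and lemma_consts: "\<alpha> > 1" "\<delta> > 0" "c0 > 0" "c1 > 0" "c2 > 0" "a1 > 0"
    and L1: "\<And>\<phi> x t. Cfun h \<phi> \<Longrightarrow> is_solution h f B Q \<phi> x \<Longrightarrow> t \<ge> 0 \<Longrightarrow> hnorm h (seg x t) \<le> \<delta> \<Longrightarrow>
        \<exists>D. ((\<lambda>\<tau>. vfun h f B Q V gV w1 w2 \<gamma> \<mu> \<epsilon> \<tau> (seg x \<tau>)) has_real_derivative D) (at t within {0..})
           \<and> D \<le> - c0 * norm (x t) powr (\<gamma> + \<mu> - 1) - c1 * norm (x (t - h)) powr (\<gamma> + \<mu> - 1)
                - c2 * integral {-h..0} (\<lambda>\<theta>. norm (x (t + \<theta>)) powr (\<gamma> + \<mu> - 1))"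
    and L2: "\<And>t \<phi>. t \<ge> 0 \<Longrightarrow> in_S h \<alpha> \<phi> \<Longrightarrow> hnorm h \<phi> \<le> \<delta> \<Longrightarrow>
        vfun h f B Q V gV w1 w2 \<gamma> \<mu> \<epsilon> t \<phi>
          \<ge> a1 * norm (\<phi> 0) powr \<gamma> + w1 * integral {-h..0} (\<lambda>\<theta>. norm (\<phi> \<theta>) powr (\<gamma> + \<mu> - 1))"
    and \<Delta>_pos: "\<Delta> > 0"
    and \<Delta>_root: "\<alpha>1 * \<Delta> powr \<gamma>
        + ((\<beta> * (m1 + m2) + w1 + h * w2) * h) * \<Delta> powr (\<gamma> + \<mu> - 1)
        + (\<beta> * (p1 + p2) * (bh * h + \<kappa>)) * \<Delta> powr (\<gamma> + \<sigma> - 1)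
        = a1 * \<delta> powr \<gamma>"
  shows "\<forall>\<phi> x. Cfun h \<phi> \<and> hnorm h \<phi> < \<Delta> \<and> is_solution h f B Q \<phi> x \<longrightarrow>
           (x \<longlongrightarrow> 0) at_top \<and> (\<forall>t\<ge>0. hnorm h (seg x t) \<le> \<delta>)"
proof (intro allI impI, elim conjE)
  fix \<phi> x
  assume "Cfun h \<phi>" "hnorm h \<phi> < \<Delta>" and sol: "is_solution h f B Q \<phi> x"
  let ?v = "vfun h f B Q V gV w1 w2 \<gamma> \<mu> \<epsilon>"
  let ?b2 = "(\<beta> * (m1 + m2) + w1 + h * w2) * h" and ?b3 = "\<beta> * (p1 + p2) * (bh * h + \<kappa>)"
  let ?G = "\<lambda>r. \<alpha>1 * r powr \<gamma> + ?b2 * r powr (\<gamma> + \<mu> - 1) + ?b3 * r powr (\<gamma> + \<sigma> - 1)"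
  have x_init: "\<And>\<theta>. \<theta> \<in> {-h..0} \<Longrightarrow> x \<theta> = \<phi> \<theta>" and x_cont: "continuous_on {-h..} x"
    and x_der: "\<And>t. 0 \<le> t \<Longrightarrow> (x has_vector_derivative
      f (x t) (x (t - h)) + blinfun_apply (B t) (Q (x t) (x (t - h)))) (at t within {0..})"
    using sol unfolding is_solution_def by auto
  have Lmat_bound: "norm (Lmat h B \<epsilon> t) \<le> \<kappa>" if "0 \<le> t" for t
    using cases_ab norm_Lmat_le_omega[OF _ _ that B_bound] h_pos that by auto
  have "0 \<le> bh" "0 \<le> \<kappa>"
    using order_trans[OF norm_ge_zero B_bound[of 0]] order_trans[OF norm_ge_zero Lmat_bound[of 0]] by simp_all
  have v_le: "\<bar>?v t \<psi>\<bar> \<le> ?G r" if "0 \<le> t" "0 \<le> r" "\<forall>\<theta>\<in>{-h..0}. norm (\<psi> \<theta>) \<le> r" for t r \<psi>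
    using h_pos f_consts Q_consts V_consts \<mu>_gt \<sigma>_gt \<gamma>_ge w12 order_trans[OF _ V_bounds(1)]
    by (intro abs_vfun_le[OF h_pos that(2,1,3) f_bound B_bound Q_bound _ V_bounds(2) gV_bound
          Lmat_bound[OF that(1)]]) auto
  have v_ge: "a1 * norm (\<psi> 0) powr \<gamma> \<le> ?v t \<psi>" if "0 \<le> t" "in_S h \<alpha> \<psi>" "hnorm h \<psi> \<le> \<delta>" for t \<psi>
    using L2[OF that] w12(1) integral_nonneg_pointwise[of "{-h..0}" "\<lambda>\<theta>. norm (\<psi> \<theta>) powr (\<gamma> + \<mu> - 1)"]
    by (smt (verit) mult_nonneg_nonneg powr_ge_zero)
  have params: "0 \<le> h" "1 \<le> \<alpha>" "0 < \<gamma>" "\<gamma> < \<gamma> + \<mu> - 1" "\<gamma> < \<gamma> + \<sigma> - 1" "0 < \<gamma> + \<mu> - 1"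
      "0 \<le> c1" "0 \<le> c2" "0 < ?b2" "0 \<le> ?b3"
    using h_pos lemma_consts \<gamma>_ge \<mu>_gt \<sigma>_gt V_consts(4) f_consts Q_consts w12 \<open>0 \<le> bh\<close> \<open>0 \<le> \<kappa>\<close>
    by (simp_all add: add_nonneg_pos add_pos_pos)
  have init_le: "norm (x \<theta>) \<le> hnorm h \<phi>" if "\<theta> \<in> {-h..0}" for \<theta>
    using norm_le_hnorm[OF \<open>Cfun h \<phi>\<close> that] x_init[OF that] by simp
  have "0 \<le> hnorm h \<phi>" using order_trans[OF norm_ge_zero init_le[of 0]] h_pos by simp
  moreover have "\<forall>\<theta>\<in>{-h..0}. norm (seg x 0 \<theta>) \<le> hnorm h \<phi>" using init_le by (simp add: seg_def)
  ultimately have "\<Delta> < \<delta>" and start: "?v 0 (seg x 0) < a1 * \<delta> powr \<gamma>"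
    using start_below_level[where v="?v 0", OF params(1,2) lemma_consts(2) params(3-5) V_consts(3) params(9,10)
        v_ge[OF order_refl] order_trans[OF abs_ge_self v_le[OF order_refl]] \<Delta>_root _ \<open>hnorm h \<phi> < \<Delta>\<close>]
    by blast+
  have init: "norm (x \<theta>) < \<delta>" if "\<theta> \<in> {-h..0}" for \<theta>
    using init_le[OF that] \<open>hnorm h \<phi> < \<Delta>\<close> \<open>\<Delta> < \<delta>\<close> by simp
  show "(x \<longlongrightarrow> 0) at_top \<and> (\<forall>t\<ge>0. hnorm h (seg x t) \<le> \<delta>)"
  proof (rule attractive_if_Lyapunov_Krasovskii[where v="?v", OF h_pos params(2) lemma_consts(3) params(7,8,6)
        x_cont x_der _ init L1[OF \<open>Cfun h \<phi>\<close> sol] v_ge _ start])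
    show "norm (f (x t) (x (t - h)) + blinfun_apply (B t) (Q (x t) (x (t - h))))
        \<le> (m1 + m2) * \<delta> powr \<mu> + bh * ((p1 + p2) * \<delta> powr \<sigma>)"
      if "0 \<le> t" "norm (x t) \<le> \<delta>" "norm (x (t - h)) \<le> \<delta>" for t
      using that f_consts Q_consts \<mu>_gt \<sigma>_gt by (intro norm_rhs_le[OF f_bound Q_bound] B_bound) auto
    show "- ?G \<delta> \<le> ?v t \<psi>" if "0 \<le> t" "\<forall>\<theta>\<in>{-h..0}. norm (\<psi> \<theta>) \<le> \<delta>" for t \<psi>
      using v_le[OF that(1) _ that(2)] lemma_consts(2) by (simp add: abs_le_iff)
  qed
qed

end
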